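(* Suppose the following two conditions hold: (i) $\mathrm{rank}(A_{\mathrm{eq}}) = \mathrm{rank}([A_{\mathrm{eq}} \; b_{\mathrm{eq}}])$, and (ii) $n_u n_L \geq \mathrm{rank}(A_{\mathrm{eq}})$, where $A_{\mathrm{eq}}$ is the block-diagonal matrix with $n_u$ diagonal blocks each equal to $W_{\Gamma_{\mathrm{eq}},L}^T$, and $b_{\mathrm{eq}} = [-(K_{\mathrm{lqr}}^{(1)})^T; \dots; -(K_{\mathrm{lqr}}^{(n_u)})^T]$ stacks the negated transposed rows of $K_{\mathrm{lqr}}$. Then the solution $(\hat{W}_{L+1}^*, \hat{b}_{L+1}^* )$ of the convex optimization problem $$\min_{\hat{W}_{L+1},\hat{b}_{L+1}} \sum_{i,j=1}^{n_u,n_L} (\hat{W}_{L+1}^{(i,j)} - W_{L+1}^{(i,j)})^2 + \sum_{i=1}^{n_u} (\hat{b}_{L+1}^{(i)} - b_{L+1}^{(i)})^2$$ subject to $\hat{W}_{L+1} W_{\Gamma_{\mathrm{eq}},L} = -K_{\mathrm{lqr}}$ and $\hat{W}_{L+1} b_{\Gamma_{\mathrm{eq}},L} + \hat{b}_{L+1} = 0$, provides a weight and bias for the last layer such that the modified network $\mathcal{N}(x;\theta_{\mathrm{lqr}})$, with $\theta_{l,\mathrm{lqr}} = \theta_l$ for $l \in \{1,\dots,L\}$ and last-layer parameters $\{\hat{W}_{L+1}^*, \hat{b}_{L+1}^*\}$, satisfies $\mathcal{N}(x;\theta_{\mathrm{lqr}}) = -K_{\mathrm{lqr}} x$ for all $x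 \in \mathcal{R}_{\mathrm{eq}}$, while minimizing the change in the parameters of the last layer.
   Context: Consider a linear system $x_{k+1} = A x_k + B u_k$ with $x \in \mathbb{R}^{n_x}$, $u \in \mathbb{R}^{n_u}$, equilibrium $x_{\mathrm{eq}} = 0$, and LQR gain $K_{\mathrm{lqr}}$ (optimal unconstrained feedback $u = -K_{\mathrm{lqr}} x$ for cost $\sum x^TQx + u^TRu$). A feed-forward ReLU network controller $\mathcal{N}(x;\theta)$ has $L$ hidden layers, with $n_L$ neurons in the last hidden layer, parameters $\theta_l = \{W_l, b_l\}$, layers $f_l(\xi) = W_l \xi + b_l$, ReLU activations $\max(0,\cdot)$, and a linear output layer $u = W_{L+1}\xi_L + b_{L+1}$. An activation pattern assigns to each hidden neuron a binary value (1 if its pre-activation is $\geq 0$, else 0); $\Gamma_{\mathrm{eq}}$ is the activation pattern at $x_{\mathrm{eq}}$, and $\mathcal{R}_{\mathrm{eq}}$ is the polytopic region of states sharing this activation pattern. On $\mathcal{R}_{\mathrm{eq}}$ the output of the last hidden layer is the affine function $W_{\Gamma_{\mathrm{eq}},L} x + b_{\Gamma_{\mathrm{eq}},L}$ (obtained by composing the hidden layers with the fixed activation pattern), so the network equals $W_{L+1}(W_{\Gamma_{\mathrm{eq}},L}x + b_{\Gamma_{\mathrm{eq}},L}) + b_{L+1}$ there. The regions depend only on the hidden layers, so changing the output layer does not change $\mathcal{R}_{\mathrm{eq}}$. Conditions (i)-(ii) are the solvability conditions of the linear system $A_{\mathrm{eq}} w = b_{\mathrm{eq}}$, with $w$ the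 stacked rows of $\hat{W}_{L+1}$, equivalent to $\hat{W}_{L+1} W_{\Gamma_{\mathrm{eq}},L} = -K_{\mathrm{lqr}}$. *)

theory Defs
  imports "Jordan_Normal_Form.DL_Rank"
begin

type_synonym layer = "real mat \<times> real vec"

definition relu_vec :: "real vec \<Rightarrow> real vec" where
  "relu_vec v = map_vec (\<lambda>t. max 0 t) v"

fun wf_layers :: "nat \<Rightarrow> layer list \<Rightarrow> nat \<Rightarrow> bool" where
  "wf_layers n [] m = (n = m)"
| "wf_layers n ((W, b) # ls) m =
     (W \<in> carrier_mat (dim_row W) n \<and> b \<in> carrier_vec (dim_row W) \<and> wf_layers (dim_row W) ls m)"

fun hidden_out :: "layer list \<Rightarrow> real vec \<Rightarrow> real vec" where
  "hidden_out [] \<xi> = \<xi>"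
| "hidden_out ((W, b) # ls) \<xi> = hidden_out ls (relu_vec (W *\<^sub>v \<xi> + b))"

definition net :: "layer list \<Rightarrow> real mat \<Rightarrow> real vec \<Rightarrow> real vec \<Rightarrow> real vec" where
  "net ls Wo bo x = Wo *\<^sub>v hidden_out ls x + bo"

fun act_pattern :: "layer list \<Rightarrow> real vec \<Rightarrow> bool list list" where
  "act_pattern [] \<xi> = []"
| "act_pattern ((W, b) # ls) \<xi> =
     (let z = W *\<^sub>v \<xi> + b in map (\<lambda>i. z $ i \<ge> 0) [0..<dim_vec z] # act_pattern ls (relu_vec z))"

definition R_eq :: "nat \<Rightarrow> layer list \<Rightarrow> real vec set" where
  "R_eq nx ls = {x \<in> carrier_vec nx. act_pattern ls x = act_pattern ls (0\<^sub>v nx)}"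

definition pattern_diag :: "bool list \<Rightarrow> real mat" where
  "pattern_diag g = mat (length g) (length g) (\<lambda>(i, j). if i = j \<and> g ! i then 1 else 0)"

text \<open>Composition of hidden layers with fixed activation pattern: affine map (M, c), x \<mapsto> M x + c.\<close>
fun aff_pattern :: "layer list \<Rightarrow> bool list list \<Rightarrow> real mat \<times> real vec \<Rightarrow> real mat \<times> real vec" where
  "aff_pattern ((W, b) # ls) (g # gs) (M, c) =
     aff_pattern ls gs (pattern_diag g * (W * M), pattern_diag g *\<^sub>v (W *\<^sub>v c + b))"
| "aff_pattern _ _ Mc = Mc"

definition W_Gamma :: "nat \<Rightarrow> layer list \<Rightarrow> real mat" where
  "W_Gamma nx ls = fst (aff_pattern ls (act_pattern ls (0\<^sub>v nx)) (1\<^sub>m nx, 0\<^sub>v nx))"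

definition b_Gamma :: "nat \<Rightarrow> layer list \<Rightarrow> real vec" where
  "b_Gamma nx ls = snd (aff_pattern ls (act_pattern ls (0\<^sub>v nx)) (1\<^sub>m nx, 0\<^sub>v nx))"

text \<open>A_eq: block-diagonal with nu blocks W_Gamma^T (each nx x nL).\<close>
definition A_eq :: "nat \<Rightarrow> nat \<Rightarrow> nat \<Rightarrow> real mat \<Rightarrow> real mat" where
  "A_eq nu nx nL WG = mat (nu * nx) (nu * nL)
     (\<lambda>(r, c). if r div nx = c div nL then WG $$ (c mod nL, r mod nx) else 0)"

definition b_eq :: "nat \<Rightarrow> nat \<Rightarrow> real mat \<Rightarrow> real vec" where
  "b_eq nu nx K = vec (nu * nx) (\<lambda>r. - K $$ (r div nx, r mod nx))"

definition augment :: "real mat \<Rightarrow> real vec \<Rightarrow> real mat" where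
  "augment A b = mat (dim_row A) (dim_col A + 1)
     (\<lambda>(r, c). if c < dim_col A then A $$ (r, c) else b $ r)"

definition last_layer_cost :: "nat \<Rightarrow> nat \<Rightarrow> real mat \<Rightarrow> real vec \<Rightarrow> real mat \<Rightarrow> real vec \<Rightarrow> real" where
  "last_layer_cost nu nL Wo bo Wh bh =
     (\<Sum>i<nu. \<Sum>j<nL. (Wh $$ (i, j) - Wo $$ (i, j))^2) + (\<Sum>i<nu. (bh $ i - bo $ i)^2)"

definition lqr_feasible :: "nat \<Rightarrow> nat \<Rightarrow> nat \<Rightarrow> layer list \<Rightarrow> real mat \<Rightarrow> real mat \<Rightarrow> real vec \<Rightarrow> bool" where
  "lqr_feasible nu nx nL ls K Wh bh \<longleftrightarrow>
     Wh \<in> carrier_mat nu nL \<and> bh \<in> carrier_vec nu \<and>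
     Wh * W_Gamma nx ls = - K \<and> Wh *\<^sub>v b_Gamma nx ls + bh = 0\<^sub>v nu"

definition lqr_optimal ::
  "nat \<Rightarrow> nat \<Rightarrow> nat \<Rightarrow> layer list \<Rightarrow> real mat \<Rightarrow> real mat \<Rightarrow> real vec \<Rightarrow> real mat \<Rightarrow> real vec \<Rightarrow> bool" where
  "lqr_optimal nu nx nL ls K Wo bo Wh bh \<longleftrightarrow>
     lqr_feasible nu nx nL ls K Wh bh \<and>
     (\<forall>W' b'. lqr_feasible nu nx nL ls K W' b' \<longrightarrow>
        last_layer_cost nu nL Wo bo Wh bh \<le> last_layer_cost nu nL Wo bo W' b')"

end

theory Submission
  imports Defs "HOL-Analysis.Function_Topology" "HOL-Analysis.Elementary_Metric_Spaces"
begin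

(* Every neuron keeps on R_eq the activation it has at 0, so there the hidden layers act as the
   affine map x \<mapsto> W_Gamma x + b_Gamma, and any last layer with Wh W_Gamma = -K and
   Wh b_Gamma + bh = 0 makes the network equal to -K x on R_eq.  Condition (i) is the
   Rouche-Capelli criterion for the row-stacked system A_eq w = b_eq, i.e. Wh W_Gamma = -K, so
   these constraints describe a nonempty affine set.  The cost is a squared Euclidean distance:
   a minimiser exists because it is continuous and its sublevel sets are compact, and it is
   unique because, by the parallelogram law, the midpoint of two distinct minimisers would be
   strictly cheaper. *)

subsection \<open>The network on the region of the equilibrium pattern\<close>

lemma pattern_diag_mult_vec_index:
  assumes "i < length g" and "dim_vec v = length g"
  shows "(pattern_diag g *\<^sub>v v) $ i = (if g ! i then v $ i else 0)"
proof -
  have "(pattern_diag g *\<^sub>v v) $ i = (\<Sum>j\<in>{0..<length g}. (if i = j \<and> g ! i then 1 else 0) * v $ j)"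
    using assms by (simp add: pattern_diag_def scalar_prod_def)
  also have "\<dots> = (\<Sum>j\<in>{0..<length g}. if j = i then (if g ! i then v $ i else 0) else 0)"
    by (rule sum.cong) auto
  finally show ?thesis using assms(1) by simp
qed

lemma relu_vec_eq_pattern_diag_mult:
  "relu_vec z = pattern_diag (map (\<lambda>i. z $ i \<ge> 0) [0..<dim_vec z]) *\<^sub>v z"
proof (rule eq_vecI)
  fix i assume "i < dim_vec (pattern_diag (map (\<lambda>i. z $ i \<ge> 0) [0..<dim_vec z]) *\<^sub>v z)"
  then have "i < dim_vec z" by (simp add: pattern_diag_def)
  then show "relu_vec z $ i = (pattern_diag (map (\<lambda>i. z $ i \<ge> 0) [0..<dim_vec z]) *\<^sub>v z) $ i"
    by (subst pattern_diag_mult_vec_index) (auto simp: relu_vec_def)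
qed (simp add: relu_vec_def pattern_diag_def)

lemma mult_mat_vec_affine:
  assumes "A \<in> carrier_mat n m" and "M \<in> carrier_mat m k" and "x \<in> carrier_vec k"
    and "c \<in> carrier_vec m"
  shows "A *\<^sub>v (M *\<^sub>v x + c) = (A * M) *\<^sub>v x + A *\<^sub>v c"
  using assms by (simp add: mult_add_distrib_mat_vec[OF assms(1)] assoc_mult_mat_vec)

lemma aff_pattern_hidden_out:
  assumes "wf_layers n ls m" and "M \<in> carrier_mat n k" and "c \<in> carrier_vec n"
    and "x \<in> carrier_vec k" and "\<xi> = M *\<^sub>v x + c"
  shows "fst (aff_pattern ls (act_pattern ls \<xi>) (M, c)) \<in> carrier_mat m k \<and>
    snd (aff_pattern ls (act_pattern ls \<xi>) (M, c)) \<in> carrier_vec m \<and>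
    hidden_out ls \<xi> = fst (aff_pattern ls (act_pattern ls \<xi>) (M, c)) *\<^sub>v x
      + snd (aff_pattern ls (act_pattern ls \<xi>) (M, c))"
  using assms
proof (induction ls arbitrary: n \<xi> M c)
  case Nil
  then show ?case by simp
next
  case (Cons l ls)
  obtain W b where l: "l = (W, b)" by fastforce
  let ?z = "W *\<^sub>v \<xi> + b"
  let ?D = "pattern_diag (map (\<lambda>i. ?z $ i \<ge> 0) [0..<dim_vec ?z])"
  have W: "W \<in> carrier_mat (dim_row W) n" and b: "b \<in> carrier_vec (dim_row W)"
    and wf: "wf_layers (dim_row W) ls m"
    using Cons.prems(1) l by auto
  have M: "M \<in> carrier_mat n k" and c: "c \<in> carrier_vec n" and x: "x \<in> carrier_vec k"
    using Cons.prems by auto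
  have D: "?D \<in> carrier_mat (dim_row W) (dim_row W)"
    using b by (simp add: pattern_diag_def)
  have WM: "W * M \<in> carrier_mat (dim_row W) k"
    using W M by (rule mult_carrier_mat)
  have Wcb: "W *\<^sub>v c + b \<in> carrier_vec (dim_row W)"
    using mult_mat_vec_carrier[OF W c] b by (rule add_carrier_vec)
  have "?z = (W * M) *\<^sub>v x + W *\<^sub>v c + b"
    unfolding Cons.prems(5) mult_mat_vec_affine[OF W M x c] ..
  also have "\<dots> = (W * M) *\<^sub>v x + (W *\<^sub>v c + b)"
    using mult_mat_vec_carrier[OF WM x] mult_mat_vec_carrier[OF W c] b by (rule assoc_add_vec)
  finally have z: "?z = (W * M) *\<^sub>v x + (W *\<^sub>v c + b)" .
  have "relu_vec ?z = ?D *\<^sub>v ?z"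
    by (rule relu_vec_eq_pattern_diag_mult)
  also have "\<dots> = ?D *\<^sub>v ((W * M) *\<^sub>v x + (W *\<^sub>v c + b))"
    by (simp only: z)
  also have "\<dots> = (?D * (W * M)) *\<^sub>v x + ?D *\<^sub>v (W *\<^sub>v c + b)"
    by (rule mult_mat_vec_affine[OF D WM x Wcb])
  finally have relu: "relu_vec ?z = (?D * (W * M)) *\<^sub>v x + ?D *\<^sub>v (W *\<^sub>v c + b)" .
  have "?D * (W * M) \<in> carrier_mat (dim_row W) k" "?D *\<^sub>v (W *\<^sub>v c + b) \<in> carrier_vec (dim_row W)"
    using mult_carrier_mat[OF D WM] mult_mat_vec_carrier[OF D Wcb] .
  from Cons.IH[OF wf this x relu] show ?case
    using l by (simp add: Let_def)
qed

lemma W_Gamma_b_Gamma_carrier: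
  assumes "wf_layers nx ls nL"
  shows "W_Gamma nx ls \<in> carrier_mat nL nx" and "b_Gamma nx ls \<in> carrier_vec nL"
proof -
  have "(0\<^sub>v nx :: real vec) = 1\<^sub>m nx *\<^sub>v 0\<^sub>v nx + 0\<^sub>v nx" by simp
  from aff_pattern_hidden_out[OF assms one_carrier_mat zero_carrier_vec zero_carrier_vec this]
  show "W_Gamma nx ls \<in> carrier_mat nL nx" and "b_Gamma nx ls \<in> carrier_vec nL"
    unfolding W_Gamma_def b_Gamma_def by auto
qed

lemma hidden_out_R_eq:
  assumes "wf_layers nx ls nL" and "x \<in> R_eq nx ls"
  shows "hidden_out ls x = W_Gamma nx ls *\<^sub>v x + b_Gamma nx ls"
proof -
  from assms(2) have x: "x \<in> carrier_vec nx" and pattern: "act_pattern ls x = act_pattern ls (0\<^sub>v nx)"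
    by (auto simp: R_eq_def)
  have "x = 1\<^sub>m nx *\<^sub>v x + 0\<^sub>v nx" using x by simp
  from aff_pattern_hidden_out[OF assms(1) one_carrier_mat zero_carrier_vec x this]
  show ?thesis
    unfolding W_Gamma_def b_Gamma_def pattern by blast
qed

lemma net_R_eq_if_lqr_feasible:
  assumes "wf_layers nx ls nL" and K: "K \<in> carrier_mat nu nx"
    and "lqr_feasible nu nx nL ls K Wh bh" and "x \<in> R_eq nx ls"
  shows "net ls Wh bh x = - (K *\<^sub>v x)"
proof -
  have WG: "W_Gamma nx ls \<in> carrier_mat nL nx" and bG: "b_Gamma nx ls \<in> carrier_vec nL"
    using W_Gamma_b_Gamma_carrier[OF assms(1)] by auto
  from assms(3) have Wh: "Wh \<in> carrier_mat nu nL" and bh: "bh \<in> carrier_vec nu"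
    and WK: "Wh * W_Gamma nx ls = - K" and bias: "Wh *\<^sub>v b_Gamma nx ls + bh = 0\<^sub>v nu"
    by (auto simp: lqr_feasible_def)
  have x: "x \<in> carrier_vec nx" using assms(4) by (simp add: R_eq_def)
  have "net ls Wh bh x = (Wh * W_Gamma nx ls) *\<^sub>v x + Wh *\<^sub>v b_Gamma nx ls + bh"
    unfolding net_def hidden_out_R_eq[OF assms(1,4)] mult_mat_vec_affine[OF Wh WG x bG] ..
  also have "\<dots> = (Wh * W_Gamma nx ls) *\<^sub>v x + (Wh *\<^sub>v b_Gamma nx ls + bh)"
    using mult_mat_vec_carrier[OF mult_carrier_mat[OF Wh WG] x] mult_mat_vec_carrier[OF Wh bG] bh
    by (rule assoc_add_vec)
  also have "\<dots> = - (K *\<^sub>v x)"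
    unfolding WK bias using K x by simp
  finally show ?thesis .
qed

subsection \<open>Feasible last layers\<close>

lemma add_eq_zero_vec_iff_eq_uminus:
  fixes u v :: "'a :: ab_group_add vec"
  assumes "u \<in> carrier_vec n" and "v \<in> carrier_vec n"
  shows "u + v = 0\<^sub>v n \<longleftrightarrow> v = - u"
proof
  assume "u + v = 0\<^sub>v n"
  then have "u $ i + v $ i = 0" if "i < n" for i
    using assms that by (metis carrier_vecD index_add_vec(1) index_zero_vec(1))
  then show "v = - u"
    using assms by (intro eq_vecI) (auto, metis add.commute eq_neg_iff_add_eq_0)
qed (use assms in simp)

lemma lqr_feasible_iff:
  assumes "b_Gamma nx ls \<in> carrier_vec nL"
  shows "lqr_feasible nu nx nL ls K Wh bh \<longleftrightarrow>
    Wh \<in> carrier_mat nu nL \<and> Wh * W_Gamma nx ls = - K \<and> bh = - (Wh *\<^sub>v b_Gamma nx ls)"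
  unfolding lqr_feasible_def using assms add_eq_zero_vec_iff_eq_uminus[of "Wh *\<^sub>v b_Gamma nx ls" nu bh]
  by auto

lemma lqr_feasible_midpoint:
  assumes WG: "W_Gamma nx ls \<in> carrier_mat nL nx" and bG: "b_Gamma nx ls \<in> carrier_vec nL"
    and "lqr_feasible nu nx nL ls K W1 b1" and "lqr_feasible nu nx nL ls K W2 b2"
  shows "lqr_feasible nu nx nL ls K ((1/2) \<cdot>\<^sub>m (W1 + W2)) ((1/2) \<cdot>\<^sub>v (b1 + b2))"
proof -
  from assms(3,4) have W1: "W1 \<in> carrier_mat nu nL" and W2: "W2 \<in> carrier_mat nu nL"
    and WK1: "W1 * W_Gamma nx ls = - K" and WK2: "W2 * W_Gamma nx ls = - K"
    and b1: "b1 = - (W1 *\<^sub>v b_Gamma nx ls)" and b2: "b2 = - (W2 *\<^sub>v b_Gamma nx ls)"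
    unfolding lqr_feasible_iff[OF bG] by auto
  have W12: "W1 + W2 \<in> carrier_mat nu nL" using W1 W2 by simp
  have "((1/2) \<cdot>\<^sub>m (W1 + W2)) * W_Gamma nx ls = (1/2) \<cdot>\<^sub>m (W1 * W_Gamma nx ls + W2 * W_Gamma nx ls)"
    unfolding mult_smult_assoc_mat[OF W12 WG] add_mult_distrib_mat[OF W1 W2 WG] ..
  also have "\<dots> = - K"
    unfolding WK1 WK2 by (intro eq_matI) auto
  finally have "((1/2) \<cdot>\<^sub>m (W1 + W2)) * W_Gamma nx ls = - K" .
  moreover have "(1/2) \<cdot>\<^sub>v (b1 + b2) = - (((1/2) \<cdot>\<^sub>m (W1 + W2)) *\<^sub>v b_Gamma nx ls)"
    unfolding b1 b2 using W1 W2 bG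
    by (intro eq_vecI) (auto simp: smult_scalar_prod_distrib add_scalar_prod_distrib[of _ nL] algebra_simps)
  ultimately show ?thesis
    unfolding lqr_feasible_iff[OF bG] using W12 by simp
qed

lemma cols_augment:
  assumes "b \<in> carrier_vec (dim_row A)"
  shows "cols (augment A b) = cols A @ [b]"
  using assms by (intro nth_equalityI) (auto simp: augment_def cols_def nth_append intro!: eq_vecI)

lemma solvable_if_rank_augment_eq:
  fixes A :: "real mat"
  assumes A: "A \<in> carrier_mat n nc" and b: "b \<in> carrier_vec n"
    and rank: "vec_space.rank n A = vec_space.rank n (augment A b)"
  shows "\<exists>x\<in>carrier_vec nc. A *\<^sub>v x = b"
proof -
  interpret vec_space "TYPE(real)" n .
  have "b \<in> span (set (cols A))"
  proof (rule ccontr)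
    assume b_notin: "b \<notin> span (set (cols A))"
    have colsA: "set (cols A) \<subseteq> carrier_vec n" using A cols_dim by blast
    have "lin_indpt {}"
      by (metis (no_types) empty_subsetI fin_dim finite_basis_exists subset_li_is_li vec_vs vectorspace.basis_def)
    then obtain U where U: "finite U" "maximal U (\<lambda>T. T \<subseteq> set (cols A) \<and> lin_indpt T)"
      using maximal_exists_superset[of "set (cols A)" "\<lambda>T. T \<subseteq> set (cols A) \<and> lin_indpt T" "{}"] by auto
    have U_cols: "U \<subseteq> set (cols A)" and U_indpt: "lin_indpt U"
      using U(2) by (auto simp: maximal_def)
    have U_carrier: "U \<subseteq> carrier_vec n" using U_cols colsA by blast
    have b_notin_U: "b \<notin> span U"
      using b_notin span_is_monotone[OF U_cols] by blast
    then have "b \<notin> U" using span_mem[OF U_carrier] by blast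
    have "lin_indpt (insert b U)"
      using lin_dep_iff_in_span[OF U_carrier U_indpt b \<open>b \<notin> U\<close>] b_notin_U by simp
    moreover have "insert b U \<subseteq> set (cols (augment A b))"
      using cols_augment[of b A] A b U_cols by auto
    moreover have "augment A b \<in> carrier_mat n (nc + 1)"
      using A by (simp add: augment_def)
    ultimately have "card (insert b U) \<le> rank (augment A b)"
      by (intro rank_ge_card_indpt)
    also have "\<dots> = card U"
      using rank rank_card_indpt[OF A U(2)] by simp
    finally show False using U(1) \<open>b \<notin> U\<close> by simp
  qed
  then have "b \<in> {y \<in> carrier_vec (dim_row A). \<exists>x\<in>carrier_vec (dim_col A). A *\<^sub>v x = y}"
    unfolding col_space_eq[OF A, symmetric] col_space_def .
  then show ?thesis using A by auto
qed

lemma add_mult_less_mult: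
  fixes i k m n :: nat
  assumes "i < m" and "k < n"
  shows "i * n + k < m * n"
proof -
  have "i * n + k < Suc i * n" using assms(2) by simp
  also have "\<dots> \<le> m * n" using assms(1) by (intro mult_le_mono1) simp
  finally show ?thesis .
qed

lemma sum_lessThan_mult_if_div_eq:
  fixes g :: "nat \<Rightarrow> 'a::comm_monoid_add"
  assumes "i < m"
  shows "(\<Sum>c<m * n. if c div n = i then g c else 0) = (\<Sum>k<n. g (i * n + k))"
proof -
  have "{c \<in> {..<m * n}. c div n = i} = (\<lambda>k. i * n + k) ` {..<n}"
  proof
    show "{c \<in> {..<m * n}. c div n = i} \<subseteq> (\<lambda>k. i * n + k) ` {..<n}"
    proof
      fix c assume c: "c \<in> {c \<in> {..<m * n}. c div n = i}"
      then have "n > 0" by (cases n) auto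
      moreover have "c = i * n + c mod n" using c div_mult_mod_eq[of c n] by simp
      ultimately show "c \<in> (\<lambda>k. i * n + k) ` {..<n}" by (metis lessThan_iff mod_less_divisor rev_image_eqI)
    qed
    show "(\<lambda>k. i * n + k) ` {..<n} \<subseteq> {c \<in> {..<m * n}. c div n = i}"
      using assms by (auto simp: add_mult_less_mult)
  qed
  then have "(\<Sum>c<m * n. if c div n = i then g c else 0) = (\<Sum>c\<in>(\<lambda>k. i * n + k) ` {..<n}. g c)"
    by (simp add: sum.inter_filter[symmetric])
  also have "\<dots> = (\<Sum>k<n. g (i * n + k))"
    by (simp add: sum.reindex)
  finally show ?thesis .
qed

lemma A_eq_mult_vec_index:
  assumes "WG \<in> carrier_mat nL nx" and "w \<in> carrier_vec (nu * nL)" and i: "i < nu" and "j < nx"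
  shows "(A_eq nu nx nL WG *\<^sub>v w) $ (i * nx + j) = (\<Sum>k<nL. w $ (i * nL + k) * WG $$ (k, j))"
proof -
  have "(A_eq nu nx nL WG *\<^sub>v w) $ (i * nx + j)
      = (\<Sum>c<nu * nL. if c div nL = i then WG $$ (c mod nL, j) * w $ c else 0)"
    using assms add_mult_less_mult[OF i \<open>j < nx\<close>]
    by (auto simp: A_eq_def scalar_prod_def lessThan_atLeast0 intro!: sum.cong)
  also have "\<dots> = (\<Sum>k<nL. WG $$ ((i * nL + k) mod nL, j) * w $ (i * nL + k))"
    by (rule sum_lessThan_mult_if_div_eq[OF i])
  also have "\<dots> = (\<Sum>k<nL. w $ (i * nL + k) * WG $$ (k, j))"
    by (intro sum.cong) auto
  finally show ?thesis .
qed

lemma lqr_feasible_exists_if_rank_eq: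
  assumes WG: "W_Gamma nx ls \<in> carrier_mat nL nx" and bG: "b_Gamma nx ls \<in> carrier_vec nL"
    and K: "K \<in> carrier_mat nu nx"
    and rank: "vec_space.rank (nu * nx) (A_eq nu nx nL (W_Gamma nx ls))
      = vec_space.rank (nu * nx) (augment (A_eq nu nx nL (W_Gamma nx ls)) (b_eq nu nx K))"
  shows "\<exists>W b. lqr_feasible nu nx nL ls K W b"
proof -
  have "A_eq nu nx nL (W_Gamma nx ls) \<in> carrier_mat (nu * nx) (nu * nL)"
    and "b_eq nu nx K \<in> carrier_vec (nu * nx)"
    by (simp_all add: A_eq_def b_eq_def)
  from solvable_if_rank_augment_eq[OF this rank]
  obtain w where w: "w \<in> carrier_vec (nu * nL)" and sol: "A_eq nu nx nL (W_Gamma nx ls) *\<^sub>v w = b_eq nu nx K"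
    by blast
  define W where "W = mat nu nL (\<lambda>(i, k). w $ (i * nL + k))"
  have "W * W_Gamma nx ls = - K"
  proof (rule eq_matI)
    fix i j assume "i < dim_row (- K)" and "j < dim_col (- K)"
    then have i: "i < nu" and j: "j < nx" using K by auto
    have "(W * W_Gamma nx ls) $$ (i, j) = (A_eq nu nx nL (W_Gamma nx ls) *\<^sub>v w) $ (i * nx + j)"
      unfolding A_eq_mult_vec_index[OF WG w i j] using WG i j
      by (auto simp: W_def scalar_prod_def lessThan_atLeast0 intro!: sum.cong)
    also have "\<dots> = - K $$ (i, j)"
      using i j K add_mult_less_mult[OF i j] by (simp add: sol b_eq_def)
    finally show "(W * W_Gamma nx ls) $$ (i, j) = (- K) $$ (i, j)" using K i j by simp
  qed (use K WG in \<open>auto simp: W_def\<close>)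
  then have "lqr_feasible nu nx nL ls K W (- (W *\<^sub>v b_Gamma nx ls))"
    unfolding lqr_feasible_iff[OF bG] by (simp add: W_def)
  then show ?thesis by blast
qed

subsection \<open>Uniqueness of the optimal last layer\<close>

lemma last_layer_cost_nonneg: "last_layer_cost nu nL Wo bo Wh bh \<ge> 0"
  unfolding last_layer_cost_def by (intro add_nonneg_nonneg sum_nonneg) auto

lemma last_layer_cost_entry_le:
  assumes "i < nu" and "j < nL"
  shows "(Wh $$ (i, j) - Wo $$ (i, j))^2 \<le> last_layer_cost nu nL Wo bo Wh bh"
proof -
  have "(Wh $$ (i, j) - Wo $$ (i, j))^2 \<le> (\<Sum>j<nL. (Wh $$ (i, j) - Wo $$ (i, j))^2)"
    using assms(2) by (intro member_le_sum) auto
  also have "\<dots> \<le> (\<Sum>i<nu. \<Sum>j<nL. (Wh $$ (i, j) - Wo $$ (i, j))^2)"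
    using assms(1) by (intro member_le_sum[where f = "\<lambda>i. \<Sum>j<nL. (Wh $$ (i, j) - Wo $$ (i, j))^2"])
      (auto intro: sum_nonneg)
  also have "\<dots> \<le> last_layer_cost nu nL Wo bo Wh bh"
    unfolding last_layer_cost_def by (simp add: sum_nonneg)
  finally show ?thesis .
qed

lemma last_layer_cost_eq_0D:
  assumes "W1 \<in> carrier_mat nu nL" "W2 \<in> carrier_mat nu nL" "b1 \<in> carrier_vec nu" "b2 \<in> carrier_vec nu"
    and "last_layer_cost nu nL W2 b2 W1 b1 = 0"
  shows "W1 = W2" and "b1 = b2"
proof -
  have "(\<Sum>i<nu. \<Sum>j<nL. (W1 $$ (i, j) - W2 $$ (i, j))^2) = 0" and "(\<Sum>i<nu. (b1 $ i - b2 $ i)^2) = 0"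
    using assms(5) unfolding last_layer_cost_def
    by (simp_all add: add_nonneg_eq_0_iff sum_nonneg)
  then have "\<forall>i<nu. \<forall>j<nL. W1 $$ (i, j) = W2 $$ (i, j)" and "\<forall>i<nu. b1 $ i = b2 $ i"
    by (simp_all add: sum_nonneg_eq_0_iff sum_nonneg)
  then show "W1 = W2" and "b1 = b2"
    using assms(1-4) by (auto intro!: eq_matI eq_vecI)
qed

lemma last_layer_cost_midpoint:
  assumes "W1 \<in> carrier_mat nu nL" "W2 \<in> carrier_mat nu nL" "b1 \<in> carrier_vec nu" "b2 \<in> carrier_vec nu"
  shows "last_layer_cost nu nL Wo bo ((1/2) \<cdot>\<^sub>m (W1 + W2)) ((1/2) \<cdot>\<^sub>v (b1 + b2))
    = (last_layer_cost nu nL Wo bo W1 b1 + last_layer_cost nu nL Wo bo W2 b2) / 2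
      - last_layer_cost nu nL W2 b2 W1 b1 / 4"
proof -
  have parallelogram: "((x + y) / 2 - w)^2 = ((x - w)^2 + (y - w)^2) / 2 - (x - y)^2 / 4" for x y w :: real
    by (simp add: power2_eq_square field_simps)
  have "last_layer_cost nu nL Wo bo ((1/2) \<cdot>\<^sub>m (W1 + W2)) ((1/2) \<cdot>\<^sub>v (b1 + b2))
    = (\<Sum>i<nu. \<Sum>j<nL. ((W1 $$ (i, j) - Wo $$ (i, j))^2 + (W2 $$ (i, j) - Wo $$ (i, j))^2) / 2
          - (W1 $$ (i, j) - W2 $$ (i, j))^2 / 4)
      + (\<Sum>i<nu. ((b1 $ i - bo $ i)^2 + (b2 $ i - bo $ i)^2) / 2 - (b1 $ i - b2 $ i)^2 / 4)"
    unfolding last_layer_cost_def parallelogram[symmetric] using assms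
    by (intro arg_cong2[where f = "(+)"] sum.cong refl) auto
  also have "\<dots> = (last_layer_cost nu nL Wo bo W1 b1 + last_layer_cost nu nL Wo bo W2 b2) / 2
      - last_layer_cost nu nL W2 b2 W1 b1 / 4"
    unfolding last_layer_cost_def
    by (simp add: sum_subtractf sum.distrib add_divide_distrib diff_divide_distrib sum_divide_distrib)
  finally show ?thesis .
qed

lemma lqr_optimal_unique:
  assumes WG: "W_Gamma nx ls \<in> carrier_mat nL nx" and bG: "b_Gamma nx ls \<in> carrier_vec nL"
    and opt1: "lqr_optimal nu nx nL ls K Wo bo W1 b1" and opt2: "lqr_optimal nu nx nL ls K Wo bo W2 b2"
  shows "W1 = W2 \<and> b1 = b2"
proof -
  let ?cost = "last_layer_cost nu nL Wo bo"
  from opt1 opt2 have feas1: "lqr_feasible nu nx nL ls K W1 b1" and feas2: "lqr_feasible nu nx nL ls K W2 b2"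
    and min1: "\<And>W b. lqr_feasible nu nx nL ls K W b \<Longrightarrow> ?cost W1 b1 \<le> ?cost W b"
    and min2: "\<And>W b. lqr_feasible nu nx nL ls K W b \<Longrightarrow> ?cost W2 b2 \<le> ?cost W b"
    unfolding lqr_optimal_def by auto
  from feas1 feas2 have carriers: "W1 \<in> carrier_mat nu nL" "W2 \<in> carrier_mat nu nL"
    "b1 \<in> carrier_vec nu" "b2 \<in> carrier_vec nu"
    unfolding lqr_feasible_def by auto
  have "?cost W1 b1 = ?cost W2 b2"
    using min1[OF feas2] min2[OF feas1] by simp
  moreover have "?cost W1 b1 \<le> ?cost ((1/2) \<cdot>\<^sub>m (W1 + W2)) ((1/2) \<cdot>\<^sub>v (b1 + b2))"
    by (rule min1[OF lqr_feasible_midpoint[OF WG bG feas1 feas2]])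
  ultimately have "last_layer_cost nu nL W2 b2 W1 b1 \<le> 0"
    unfolding last_layer_cost_midpoint[OF carriers] by (simp add: field_simps)
  then have "last_layer_cost nu nL W2 b2 W1 b1 = 0"
    using last_layer_cost_nonneg by (rule antisym)
  then show ?thesis
    using last_layer_cost_eq_0D[OF carriers] by blast
qed

subsection \<open>Existence of an optimal last layer\<close>

lemma continuous_attains_inf_compact_sublevel:
  fixes f :: "'a::topological_space \<Rightarrow> 'b::linorder_topology"
  assumes "closed C" and "compact B" and "x0 \<in> C" and "continuous_on B f"
    and sublevel: "\<And>x. x \<in> C \<Longrightarrow> f x \<le> f x0 \<Longrightarrow> x \<in> B"
  shows "\<exists>x\<in>C. \<forall>y\<in>C. f x \<le> f y"
proof -
  have x0: "x0 \<in> B \<inter> C" using assms(3) sublevel by blast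
  obtain x where x: "x \<in> B \<inter> C" and min: "\<And>y. y \<in> B \<inter> C \<Longrightarrow> f x \<le> f y"
    using continuous_attains_inf[OF compact_Int_closed[OF assms(2,1)]] x0
      continuous_on_subset[OF assms(4)] by (metis inf_le1 empty_iff)
  have "f x \<le> f y" if "y \<in> C" for y
  proof (cases "f y \<le> f x0")
    case True
    then show ?thesis using min sublevel that by blast
  next
    case False
    then show ?thesis using min[OF x0] by simp
  qed
  then show ?thesis using x by blast
qed

lemma compact_PiE_UNIV:
  assumes "\<And>i. compact (S i)"
  shows "compact (Pi\<^sub>E UNIV S)"
proof -
  have "compactin (product_topology (\<lambda>_. euclidean) UNIV) (Pi\<^sub>E UNIV S)"
    using assms by (simp add: compactin_PiE compactin_euclidean_iff)
  then show ?thesis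
    by (simp add: euclidean_product_topology compactin_euclidean_iff)
qed

lemma continuous_on_coordinate [continuous_intros]: "continuous_on S (\<lambda>x. x i)"
  by (rule continuous_on_subset[OF continuous_on_product_coordinates]) simp

lemma closed_vanishing_outside: "closed {F :: 'a \<Rightarrow> real. \<forall>x\<in>- I. F x = 0}"
  unfolding Collect_ball_eq by (intro closed_INT ballI closed_Collect_eq continuous_intros)

lemma mat_mult_eq_iff_sum:
  assumes "B \<in> carrier_mat n nc" and "A \<in> carrier_mat nr nc"
  shows "mat nr n F * B = A \<longleftrightarrow>
    (\<forall>i\<in>{..<nr}. \<forall>j\<in>{..<nc}. (\<Sum>k<n. F (i, k) * B $$ (k, j)) = A $$ (i, j))"
  using assms by (auto simp: scalar_prod_def lessThan_atLeast0 intro!: eq_matI cong: sum.cong_simp)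

lemma closed_mat_mult_eq:
  assumes "B \<in> carrier_mat n nc" and "A \<in> carrier_mat nr nc"
  shows "closed {F :: nat \<times> nat \<Rightarrow> real. mat nr n F * B = A}"
  unfolding mat_mult_eq_iff_sum[OF assms] Collect_ball_eq
  by (intro closed_INT ballI closed_Collect_eq continuous_intros)

(* A matrix as a point of the product space nat \<times> nat \<Rightarrow> real, padded with zeros, so that the
   compactness theory of HOL-Analysis applies to sets of matrices. *)
definition mat_entries :: "nat \<Rightarrow> nat \<Rightarrow> 'a::zero mat \<Rightarrow> nat \<times> nat \<Rightarrow> 'a" where
  "mat_entries nr nc A = (\<lambda>(i, j). if i < nr \<and> j < nc then A $$ (i, j) else 0)"

lemma mat_mat_entries: "A \<in> carrier_mat nr nc \<Longrightarrow> mat nr nc (mat_entries nr nc A) = A"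
  by (auto simp: mat_entries_def intro!: eq_matI)

lemma last_layer_cost_mat:
  assumes "v \<in> carrier_vec nL"
  shows "last_layer_cost nu nL Wo bo (mat nu nL F) (- (mat nu nL F *\<^sub>v v))
    = (\<Sum>i<nu. \<Sum>j<nL. (F (i, j) - Wo $$ (i, j))^2)
      + (\<Sum>i<nu. (- (\<Sum>k<nL. F (i, k) * v $ k) - bo $ i)^2)"
  using assms unfolding last_layer_cost_def
  by (simp add: scalar_prod_def lessThan_atLeast0 cong: sum.cong_simp)

lemma last_layer_cost_le_imp_entry_box:
  assumes "\<forall>ij\<in>- ({..<nu} \<times> {..<nL}). F ij = 0"
    and "last_layer_cost nu nL Wo bo (mat nu nL F) b \<le> r"
  shows "F \<in> Pi\<^sub>E UNIV (\<lambda>(i, j). if i < nu \<and> j < nL then cball (Wo $$ (i, j)) (sqrt r) else {0})"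
proof -
  have "F (i, j) \<in> cball (Wo $$ (i, j)) (sqrt r)" if "i < nu" and "j < nL" for i j
  proof -
    have "(F (i, j) - Wo $$ (i, j))^2 \<le> last_layer_cost nu nL Wo bo (mat nu nL F) b"
      using last_layer_cost_entry_le[OF that, of "mat nu nL F" Wo bo b] that by simp
    also have "\<dots> \<le> r" by (rule assms(2))
    finally show ?thesis
      by (auto simp: dist_real_def abs_minus_commute intro!: real_le_rsqrt)
  qed
  then show ?thesis using assms(1) by auto
qed

lemma lqr_optimal_exists:
  assumes WG: "W_Gamma nx ls \<in> carrier_mat nL nx" and bG: "b_Gamma nx ls \<in> carrier_vec nL"
    and feasible: "lqr_feasible nu nx nL ls K W0 b0"
  shows "\<exists>Wh bh. lqr_optimal nu nx nL ls K Wo bo Wh bh"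
proof -
  define C where "C = {F :: nat \<times> nat \<Rightarrow> real. \<forall>ij\<in>- ({..<nu} \<times> {..<nL}). F ij = 0}
    \<inter> {F. mat nu nL F * W_Gamma nx ls = - K}"
  define f where "f F = last_layer_cost nu nL Wo bo (mat nu nL F) (- (mat nu nL F *\<^sub>v b_Gamma nx ls))"
    for F
  define r where "r = f (mat_entries nu nL W0)"
  define B where "B = Pi\<^sub>E UNIV (\<lambda>(i, j). if i < nu \<and> j < nL then cball (Wo $$ (i, j)) (sqrt r) else {0::real})"
  have feasible_entries: "mat_entries nu nL W \<in> C \<and> f (mat_entries nu nL W) = last_layer_cost nu nL Wo bo W b"
    if "lqr_feasible nu nx nL ls K W b" for W b
    using that mat_mat_entries[of W nu nL]
    unfolding lqr_feasible_iff[OF bG] C_def f_def by (auto simp: mat_entries_def split: if_splits)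
  have feasible_mat: "lqr_feasible nu nx nL ls K (mat nu nL F) (- (mat nu nL F *\<^sub>v b_Gamma nx ls))"
    if "F \<in> C" for F
    using that unfolding lqr_feasible_iff[OF bG] C_def by auto
  have "\<exists>F\<in>C. \<forall>G\<in>C. f F \<le> f G"
  proof (rule continuous_attains_inf_compact_sublevel)
    have "- K \<in> carrier_mat nu nx"
      using feasible WG unfolding lqr_feasible_def by (metis mult_carrier_mat)
    then show "closed C"
      unfolding C_def by (intro closed_Int closed_vanishing_outside closed_mat_mult_eq[OF WG])
    show "compact B"
      unfolding B_def by (intro compact_PiE_UNIV) (auto split: prod.split)
    show "mat_entries nu nL W0 \<in> C"
      using feasible_entries[OF feasible] ..
    show "continuous_on B f"
      unfolding f_def last_layer_cost_mat[OF bG] by (intro continuous_intros)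
  next
    fix F assume "F \<in> C" and "f F \<le> f (mat_entries nu nL W0)"
    then show "F \<in> B"
      unfolding B_def r_def f_def C_def by (intro last_layer_cost_le_imp_entry_box) auto
  qed
  then obtain F where "F \<in> C" and "\<forall>G\<in>C. f F \<le> f G" ..
  then have "lqr_optimal nu nx nL ls K Wo bo (mat nu nL F) (- (mat nu nL F *\<^sub>v b_Gamma nx ls))"
    unfolding lqr_optimal_def using feasible_mat feasible_entries by (metis f_def)
  then show ?thesis by blast
qed

theorem theorem2:
  fixes nx nu nL :: nat
    and ls :: "layer list"
    and Wo :: "real mat" and bo :: "real vec" and K :: "real mat"
  assumes hidden: "wf_layers nx ls nL" and L_pos: "ls \<noteq> []"
    and Wo: "Wo \<in> carrier_mat nu nL" and bo: "bo \<in> carrier_vec nu"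
    and K: "K \<in> carrier_mat nu nx"
    and cond_i: "vec_space.rank (nu * nx) (A_eq nu nx nL (W_Gamma nx ls))
                 = vec_space.rank (nu * nx)
                     (augment (A_eq nu nx nL (W_Gamma nx ls)) (b_eq nu nx K))"
    and cond_ii: "nu * nL \<ge> vec_space.rank (nu * nx) (A_eq nu nx nL (W_Gamma nx ls))"
  shows "(\<exists>!(Wh, bh). lqr_optimal nu nx nL ls K Wo bo Wh bh) \<and>
         (\<forall>Wh bh. lqr_optimal nu nx nL ls K Wo bo Wh bh \<longrightarrow>
            (\<forall>x \<in> R_eq nx ls. net ls Wh bh x = - (K *\<^sub>v x)))"
proof
  note WG = W_Gamma_b_Gamma_carrier[OF hidden]
  obtain W0 b0 where "lqr_feasible nu nx nL ls K W0 b0"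
    using lqr_feasible_exists_if_rank_eq[OF WG K cond_i] by blast
  then obtain Wh bh where "lqr_optimal nu nx nL ls K Wo bo Wh bh"
    using lqr_optimal_exists[OF WG] by blast
  then show "\<exists>!(Wh, bh). lqr_optimal nu nx nL ls K Wo bo Wh bh"
    using lqr_optimal_unique[OF WG] by (intro ex1I[of _ "(Wh, bh)"]) auto
  show "\<forall>Wh bh. lqr_optimal nu nx nL ls K Wo bo Wh bh \<longrightarrow>
      (\<forall>x \<in> R_eq nx ls. net ls Wh bh x = - (K *\<^sub>v x))"
    using net_R_eq_if_lqr_feasible[OF hidden K] by (auto simp: lqr_optimal_def)
qed

end
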